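(* Let $n\ge1$ and let $H\subseteq Q_n$ be any set of more than $2^{n-1}$ vertices. Then the subgraph of $Q_n$ induced on $H$ has a vertex of degree at least $\sqrt{n}$; that is, there exists $\beta\in H$ such that $\#\{\gamma\in H:\gamma\text{ and }\beta\text{ differ in exactly one coordinate}\}\ge\sqrt{n}$.
   Context: $Q_n=\{0,1\}^n$ is the boolean cube, viewed as a graph in which two vertices are adjacent iff they differ in exactly one coordinate. *)

theory Defs
  imports Complex_Main
begin

definition cube :: "nat \<Rightarrow> bool list set" where
  "cube n = {xs. length xs = n}"

definition cube_adj :: "nat \<Rightarrow> bool list \<Rightarrow> bool list \<Rightarrow> bool" where
  "cube_adj n x y \<longleftrightarrow> card {i. i < n \<and> x ! i \<noteq> y ! i} = 1"

end

theory Submission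
  imports Defs
begin

text \<open>Huang's argument. A signed version \<open>A\<close> of the adjacency matrix of \<open>Q\<^sub>n\<close> satisfies
  \<open>A\<^sup>2 = n I\<close>, so every vector \<open>(A + sqrt n I) y\<close> is an eigenvector of \<open>A\<close> for \<open>sqrt n\<close>;
  letting \<open>y\<close> range over vectors supported on one half of the cube gives a space of such
  eigenvectors of dimension \<open>2^(n-1)\<close>. Hence one of them vanishes on the fewer than \<open>2^(n-1)\<close>
  vertices outside \<open>H\<close>. At a vertex \<open>\<beta>\<close> where \<open>|x \<beta>|\<close> is maximal,
  \<open>sqrt n |x \<beta>| = |(A x) \<beta>|\<close> is at most \<open>|x \<beta>|\<close> times the number of neighbours of \<open>\<beta>\<close> in \<open>H\<close>,
  because the entries of \<open>A\<close> lie in \<open>[-1, 1]\<close> and vanish off the edges of the cube.\<close>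

lemma cube_Suc: "cube (Suc m) = Cons False ` cube m \<union> Cons True ` cube m"
proof
  show "cube (Suc m) \<subseteq> Cons False ` cube m \<union> Cons True ` cube m"
  proof
    fix x assume "x \<in> cube (Suc m)"
    then obtain b z where "x = b # z" "length z = m"
      unfolding cube_def by (auto simp: length_Suc_conv)
    then show "x \<in> Cons False ` cube m \<union> Cons True ` cube m"
      unfolding cube_def by (cases b) auto
  qed
qed (auto simp: cube_def)

lemma finite_cube [simp]: "finite (cube m)"
  by (induction m) (simp add: cube_def, simp add: cube_Suc)

lemma card_cube: "card (cube m) = 2 ^ m"
proof (induction m)
  case 0
  then show ?case by (simp add: cube_def)
next
  case (Suc m)
  have "card (cube (Suc m)) = card (Cons False ` cube m) + card (Cons True ` cube m)"
    unfolding cube_Suc by (rule card_Un_disjoint) auto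
  with Suc show ?case by (simp add: card_image)
qed

lemma sum_cube_Suc:
  "sum f (cube (Suc m)) = (\<Sum>z\<in>cube m. f (False # z)) + (\<Sum>z\<in>cube m. f (True # z))"
proof -
  have "sum f (cube (Suc m)) = sum f (Cons False ` cube m) + sum f (Cons True ` cube m)"
    unfolding cube_Suc by (rule sum.union_disjoint) auto
  then show ?thesis by (simp add: sum.reindex)
qed

lemma cube_adj_commute: "cube_adj n x y \<longleftrightarrow> cube_adj n y x"
  unfolding cube_adj_def by (rule arg_cong[where f = "\<lambda>S. card S = 1"]) auto

text \<open>Huang's signed adjacency matrix, built recursively as
  \<open>A\<^sub>m\<^sub>+\<^sub>1 = [[A\<^sub>m, I], [I, -A\<^sub>m]]\<close> with the blocks indexed by the first coordinate.\<close>

fun signed_adj :: "bool list \<Rightarrow> bool list \<Rightarrow> real" where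
  "signed_adj (a # x) (b # y) =
     (if a = b then (if a then - signed_adj x y else signed_adj x y)
      else of_bool (x = y))"
| "signed_adj _ _ = 0"

lemma abs_signed_adj_le_1: "\<bar>signed_adj x y\<bar> \<le> 1"
  by (induction x y rule: signed_adj.induct) auto

lemma differing_coords_Cons:
  "{i. i < Suc k \<and> (a # x) ! i \<noteq> (b # y) ! i}
     = (if a = b then {} else {0}) \<union> Suc ` {i. i < k \<and> x ! i \<noteq> y ! i}"
proof (rule set_eqI)
  fix i
  show "i \<in> {i. i < Suc k \<and> (a # x) ! i \<noteq> (b # y) ! i} \<longleftrightarrow>
      i \<in> (if a = b then {} else {0}) \<union> Suc ` {i. i < k \<and> x ! i \<noteq> y ! i}"
    by (cases i) auto
qed

lemma signed_adj_nonzero_imp_cube_adj: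
  "signed_adj x y \<noteq> 0 \<Longrightarrow> cube_adj (length x) x y"
proof (induction x y rule: signed_adj.induct)
  case (1 a x b y)
  have card_diff: "card {i. i < length (a # x) \<and> (a # x) ! i \<noteq> (b # y) ! i}
      = (if a = b then 0 else 1) + card {i. i < length x \<and> x ! i \<noteq> y ! i}"
    unfolding length_Cons differing_coords_Cons by (auto simp: card_image)
  show ?case
  proof (cases "a = b")
    case True
    with 1 show ?thesis using card_diff by (auto simp: cube_adj_def split: if_splits)
  next
    case False
    with 1 have "x = y" by (auto split: if_splits)
    with False show ?thesis using card_diff by (simp add: cube_adj_def)
  qed
qed auto

lemma signed_adj_squared:
  "x \<in> cube n \<Longrightarrow> y \<in> cube n \<Longrightarrow>
     (\<Sum>z\<in>cube n. signed_adj x z * signed_adj z y) = (if x = y then real n else 0)"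
proof (induction n arbitrary: x y)
  case 0
  then show ?case by (simp add: cube_def)
next
  case (Suc m)
  then obtain a x' b y' where "x = a # x'" "y = b # y'" "x' \<in> cube m" "y' \<in> cube m"
    unfolding cube_Suc by auto
  with Suc.IH show ?case
    unfolding sum_cube_Suc by (cases a; cases b) (auto simp: sum_negf)
qed

lemma homogeneous_system_nontrivial_solution:
  fixes c :: "'i \<Rightarrow> 'u \<Rightarrow> real"
  assumes "finite I" "finite U" "card I < card U"
  shows "\<exists>u. (\<exists>j\<in>U. u j \<noteq> 0) \<and> (\<forall>i\<in>I. (\<Sum>j\<in>U. c i j * u j) = 0)"
  using assms
proof (induction I arbitrary: U c rule: finite_induct)
  case empty
  then obtain j where "j \<in> U" by fastforce
  then show ?case by (intro exI[of _ "\<lambda>_. 1"]) auto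
next
  case (insert i I)
  show ?case
  proof (cases "\<forall>j\<in>U. c i j = 0")
    case True
    with insert.IH[of U c] insert.prems insert.hyps show ?thesis by auto
  next
    case False
    then obtain j0 where j0: "j0 \<in> U" "c i j0 \<noteq> 0" by blast
    \<comment> \<open>Gaussian elimination of the unknown \<open>j0\<close> by means of equation \<open>i\<close>.\<close>
    define c' where "c' k j = c k j - c k j0 / c i j0 * c i j" for k j
    have "card I < card (U - {j0})" using insert j0 by simp
    then obtain u' where u': "\<exists>j\<in>U - {j0}. u' j \<noteq> 0"
        "\<forall>k\<in>I. (\<Sum>j\<in>U - {j0}. c' k j * u' j) = 0"
      using insert.IH[of "U - {j0}" c'] insert.prems by auto
    define u where "u = u'(j0 := - (\<Sum>j\<in>U - {j0}. c i j * u' j) / c i j0)"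
    have reduced: "(\<Sum>j\<in>U. c k j * u j) = (\<Sum>j\<in>U - {j0}. c' k j * u' j)" for k
    proof -
      have "(\<Sum>j\<in>U - {j0}. c' k j * u' j)
          = (\<Sum>j\<in>U - {j0}. c k j * u' j) - c k j0 / c i j0 * (\<Sum>j\<in>U - {j0}. c i j * u' j)"
        by (simp add: c'_def left_diff_distrib sum_subtractf sum_distrib_left mult.assoc)
      moreover have "(\<Sum>j\<in>U. c k j * u j) = c k j0 * u j0 + (\<Sum>j\<in>U - {j0}. c k j * u' j)"
        using j0 insert.prems by (simp add: sum.remove u_def)
      ultimately show ?thesis by (simp add: u_def)
    qed
    show ?thesis
    proof (intro exI[of _ u] conjI ballI)
      show "\<exists>j\<in>U. u j \<noteq> 0" using u' by (auto simp: u_def)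
    next
      fix k assume "k \<in> insert i I"
      then show "(\<Sum>j\<in>U. c k j * u j) = 0"
        using u' j0 by (auto simp: reduced c'_def)
    qed
  qed
qed

lemma eigenvector_if_square_eq_scalar:
  fixes A :: "'a \<Rightarrow> 'a \<Rightarrow> real" and y :: "'a \<Rightarrow> real"
  assumes "finite V" and b: "b \<in> V"
    and square: "\<And>b d. b \<in> V \<Longrightarrow> d \<in> V \<Longrightarrow>
      (\<Sum>g\<in>V. A b g * A g d) = (if b = d then s * s else 0)"
  defines "x \<equiv> \<lambda>g. (\<Sum>d\<in>V. A g d * y d) + s * y g"
  shows "(\<Sum>g\<in>V. A b g * x g) = s * x b"
proof -
  have "(\<Sum>g\<in>V. A b g * x g)
      = (\<Sum>g\<in>V. \<Sum>d\<in>V. A b g * A g d * y d) + s * (\<Sum>g\<in>V. A b g * y g)"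
    unfolding x_def by (simp add: distrib_left sum.distrib sum_distrib_left mult.assoc mult.left_commute)
  also have "(\<Sum>g\<in>V. \<Sum>d\<in>V. A b g * A g d * y d) = (\<Sum>d\<in>V. (\<Sum>g\<in>V. A b g * A g d) * y d)"
    by (subst sum.swap) (simp add: sum_distrib_right)
  also have "(\<Sum>d\<in>V. (\<Sum>g\<in>V. A b g * A g d) * y d) = s * s * y b"
    using assms(1) b by (simp add: square if_distrib[of "\<lambda>t. t * _"] cong: if_cong)
  finally show ?thesis unfolding x_def by (simp add: algebra_simps)
qed

lemma abs_eigenvalue_le_induced_degree:
  fixes A :: "'a \<Rightarrow> 'a \<Rightarrow> real" and x :: "'a \<Rightarrow> real"
  assumes "finite V" "H \<subseteq> V"
    and A_bound: "\<And>b g. b \<in> V \<Longrightarrow> g \<in> V \<Longrightarrow> \<bar>A b g\<bar> \<le> 1"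
    and A_adj: "\<And>b g. b \<in> V \<Longrightarrow> g \<in> V \<Longrightarrow> A b g \<noteq> 0 \<Longrightarrow> adj g b"
    and eigen: "\<And>b. b \<in> V \<Longrightarrow> (\<Sum>g\<in>V. A b g * x g) = \<mu> * x b"
    and support: "\<And>g. g \<in> V - H \<Longrightarrow> x g = 0"
    and nonzero: "\<exists>g\<in>V. x g \<noteq> 0"
  shows "\<exists>b\<in>H. \<bar>\<mu>\<bar> \<le> real (card {g\<in>H. adj g b})"
proof -
  define M where "M = Max ((\<lambda>g. \<bar>x g\<bar>) ` V)"
  have M_ge: "\<bar>x g\<bar> \<le> M" if "g \<in> V" for g
    using that \<open>finite V\<close> by (simp add: M_def)
  have "M \<in> (\<lambda>g. \<bar>x g\<bar>) ` V"
    unfolding M_def using \<open>finite V\<close> nonzero by (intro Max_in) auto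
  then obtain b where b: "b \<in> V" "\<bar>x b\<bar> = M" by blast
  obtain g0 where "g0 \<in> V" "x g0 \<noteq> 0" using nonzero by blast
  then have "M > 0" using M_ge[of g0] by linarith
  then have "b \<in> H" using b support by fastforce
  define N where "N = {g\<in>H. adj g b}"
  have "N \<subseteq> V" using \<open>H \<subseteq> V\<close> by (auto simp: N_def)
  have outside_N: "A b g * x g = 0" if "g \<in> V - N" for g
  proof (cases "g \<in> H")
    case True
    with that have "\<not> adj g b" by (simp add: N_def)
    with that b(1) A_adj have "A b g = 0" by blast
    then show ?thesis by simp
  qed (use that support in simp)
  have "\<bar>\<mu>\<bar> * M = \<bar>\<Sum>g\<in>V. A b g * x g\<bar>"
    using eigen[OF b(1)] b(2) by (simp add: abs_mult)
  also have "\<dots> \<le> (\<Sum>g\<in>V. \<bar>A b g * x g\<bar>)"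
    by (rule sum_abs)
  also have "\<dots> = (\<Sum>g\<in>N. \<bar>A b g * x g\<bar>)"
    using \<open>finite V\<close> \<open>N \<subseteq> V\<close> outside_N by (intro sum.mono_neutral_right) auto
  also have "\<dots> \<le> (\<Sum>g\<in>N. M)"
  proof (rule sum_mono)
    fix g assume "g \<in> N"
    with \<open>N \<subseteq> V\<close> have "\<bar>A b g\<bar> * \<bar>x g\<bar> \<le> 1 * M"
      using A_bound M_ge b(1) by (intro mult_mono) auto
    then show "\<bar>A b g * x g\<bar> \<le> M" by (simp add: abs_mult)
  qed
  finally have "\<bar>\<mu>\<bar> * M \<le> real (card N) * M" by simp
  with \<open>M > 0\<close> have "\<bar>\<mu>\<bar> \<le> real (card N)" by simp
  with \<open>b \<in> H\<close> show ?thesis unfolding N_def by blast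
qed

lemma signed_adj_eigenvector_vanishing_on:
  assumes "B \<subseteq> cube (Suc m)" "card B < 2 ^ m"
  shows "\<exists>x. (\<forall>b\<in>cube (Suc m).
      (\<Sum>g\<in>cube (Suc m). signed_adj b g * x g) = sqrt (real (Suc m)) * x b)
    \<and> (\<forall>b\<in>B. x b = 0) \<and> (\<exists>g\<in>cube (Suc m). x g \<noteq> 0)"
proof -
  define s where "s = sqrt (real (Suc m))"
  \<comment> \<open>\<open>x = (A + s I) y\<close> with \<open>y\<close> given by \<open>u\<close> on the half cube \<open>False # _\<close>; \<open>coef\<close> is the matrix
    of \<open>u \<mapsto> x\<close>, and \<open>x (True # w) = u w\<close> makes \<open>x\<close> nonzero.\<close>
  define coef where "coef b w = signed_adj b (False # w) + s * of_bool (b = False # w)" for b w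
  have "finite B" using finite_subset[OF assms(1) finite_cube] .
  then obtain u where u: "\<exists>w\<in>cube m. u w \<noteq> 0" "\<forall>b\<in>B. (\<Sum>w\<in>cube m. coef b w * u w) = 0"
    using homogeneous_system_nontrivial_solution[of B "cube m" coef] assms(2)
    by (auto simp: card_cube)
  define y where "y g = (if g \<noteq> [] \<and> \<not> hd g then u (tl g) else 0)" for g
  define x where "x g = (\<Sum>d\<in>cube (Suc m). signed_adj g d * y d) + s * y g" for g
  have A_y: "(\<Sum>d\<in>cube (Suc m). signed_adj g d * y d) = (\<Sum>w\<in>cube m. signed_adj g (False # w) * u w)"
    for g by (simp add: sum_cube_Suc y_def)
  have "x b = (\<Sum>w\<in>cube m. coef b w * u w)" if "b \<in> cube (Suc m)" for b
  proof -
    have "y b = (\<Sum>w\<in>cube m. of_bool (b = False # w) * u w)"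
      using that by (auto simp: cube_Suc y_def)
    then have "s * y b = (\<Sum>w\<in>cube m. s * of_bool (b = False # w) * u w)"
      by (simp only: sum_distrib_left mult.assoc)
    then show ?thesis by (simp add: x_def A_y coef_def sum.distrib distrib_right)
  qed
  with assms(1) u(2) have "\<forall>b\<in>B. x b = 0" by auto
  moreover have "x (True # w) = u w" if "w \<in> cube m" for w
    using that unfolding x_def A_y by (simp add: y_def)
  then have "\<exists>g\<in>cube (Suc m). x g \<noteq> 0"
    using u(1) by (force simp: cube_Suc)
  moreover have "(\<Sum>g\<in>cube (Suc m). signed_adj b g * x g) = s * x b" if "b \<in> cube (Suc m)" for b
    unfolding x_def using that
    by (intro eigenvector_if_square_eq_scalar) (auto simp: signed_adj_squared s_def)
  ultimately show ?thesis unfolding s_def by blast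
qed

theorem mainTheorem3:
  fixes n :: nat and H :: "bool list set"
  assumes "n \<ge> 1"
    and "H \<subseteq> cube n"
    and "card H > 2 ^ (n - 1)"
  shows "\<exists>\<beta>\<in>H. real (card {\<gamma>\<in>H. cube_adj n \<gamma> \<beta>}) \<ge> sqrt (real n)"
proof -
  obtain m where n: "n = Suc m" using assms(1) by (cases n) auto
  have "card (cube n - H) = 2 * 2 ^ m - card H"
    using assms(2) finite_subset[OF assms(2)] by (simp add: card_Diff_subset card_cube n)
  moreover have "2 ^ m < card H" using assms(3) n by simp
  ultimately have "card (cube n - H) < 2 ^ m" using zero_less_power[of "2::nat" m] by arith
  then obtain x where
      eigen: "\<forall>b\<in>cube n. (\<Sum>g\<in>cube n. signed_adj b g * x g) = sqrt (real n) * x b"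
      and vanish: "\<forall>b\<in>cube n - H. x b = 0" and nonzero: "\<exists>g\<in>cube n. x g \<noteq> 0"
    using signed_adj_eigenvector_vanishing_on[of "cube n - H" m, folded n] by blast
  have adj: "cube_adj n g b" if "b \<in> cube n" "g \<in> cube n" "signed_adj b g \<noteq> 0" for b g
  proof -
    have "cube_adj n b g"
      using signed_adj_nonzero_imp_cube_adj[OF that(3)] that(1) by (simp add: cube_def)
    then show ?thesis using cube_adj_commute by blast
  qed
  from abs_eigenvalue_le_induced_degree[OF finite_cube assms(2) abs_signed_adj_le_1 adj
      eigen[rule_format] vanish[rule_format] nonzero]
  show ?thesis by simp
qed

end
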